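(* Let $i,j\in\mathbb{Z}^2$ be distinct and let $H$ be a finite DAG (finitely many nodes) containing $i$ and $j$ with $\mathrm{An}_H(i)\cap\mathrm{An}_H(j)=\emptyset$. Then $p_{c,2,\mathcal{P},H}=1$.
   Context: Oriented square lattice: node set $\mathbb{Z}^2$, with a directed edge $u\to v$ if and only if $v-u\in\{(1,0),(0,1)\}$; $E(\mathbb{Z}^2)$ denotes this edge set. A DAG $H$ here has $V(H)\subset\mathbb{Z}^2$ and $E(H)\subset E(\mathbb{Z}^2)$; $\mathrm{An}_H(u)$ is $u$ together with all nodes having a directed path to $u$ in $H$. Bernoulli bond percolation with parameter $p$: each edge of $E(\mathbb{Z}^2)$ is independently open with probability $p$; $P_p$ is the product measure. $C(k)$ is the set of nodes joined to $k$ by a path of open edges (orientation ignored), with those open edges. Enlargement $U(H)$: the random DAG with node set $\bigcup_{k\in V(H)}V(C(k))$ and edge set $E(H)\cup\bigcup_{k\in V(H)}E(C(k))$; equivalently, percolation under the measure $P_p^H$ on $\{0,1\}^{E(\mathbb{Z}^2)}$ in which edges of $E(H)$ are open with probability $1$ and all other edges independently open with probability $p$. $U(H)\in\mathcal{P}$ means $\mathrm{An}(i)\cap\mathrm{An}(j)\neq\emptyset$ in $U(H)$ (ancestors via directed open paths). Critical probability: $p_{c,2,\mathcal{P},H}=\inf\{p\in[0,1]: P_p(U(H)\in\mathcal{P})=1\}$. *)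

theory Defs
  imports "HOL-Probability.Probability"
begin

type_synonym node = "int \<times> int"
type_synonym edge = "node \<times> node"

definition lattice_edges :: "edge set" where
  "lattice_edges = {(u, v). v = (fst u + 1, snd u) \<or> v = (fst u, snd u + 1)}"

definition perc_measure :: "real \<Rightarrow> (edge \<Rightarrow> bool) measure" where
  "perc_measure p = PiM lattice_edges (\<lambda>_. measure_pmf (bernoulli_pmf p))"

definition open_edges :: "(edge \<Rightarrow> bool) \<Rightarrow> edge set" where
  "open_edges \<omega> = {e \<in> lattice_edges. \<omega> e}"

definition cluster_nodes :: "(edge \<Rightarrow> bool) \<Rightarrow> node \<Rightarrow> node set" where
  "cluster_nodes \<omega> k = {v. (k, v) \<in> (open_edges \<omega> \<union> (open_edges \<omega>)\<inverse>)\<^sup>*}"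

definition cluster_edges :: "(edge \<Rightarrow> bool) \<Rightarrow> node \<Rightarrow> edge set" where
  "cluster_edges \<omega> k = {e \<in> open_edges \<omega>. fst e \<in> cluster_nodes \<omega> k \<and> snd e \<in> cluster_nodes \<omega> k}"

definition enl_nodes :: "node set \<Rightarrow> (edge \<Rightarrow> bool) \<Rightarrow> node set" where
  "enl_nodes VH \<omega> = (\<Union>k\<in>VH. cluster_nodes \<omega> k)"

definition enl_edges :: "node set \<Rightarrow> edge set \<Rightarrow> (edge \<Rightarrow> bool) \<Rightarrow> edge set" where
  "enl_edges VH EH \<omega> = EH \<union> (\<Union>k\<in>VH. cluster_edges \<omega> k)"

definition ancestors :: "edge set \<Rightarrow> node \<Rightarrow> node set" where
  "ancestors E u = {w. (w, u) \<in> E\<^sup>*}"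

text \<open>The event U(H) \<in> P: An(i) \<inter> An(j) \<noteq> {} in U(H).\<close>
definition enl_in_P :: "node \<Rightarrow> node \<Rightarrow> node set \<Rightarrow> edge set \<Rightarrow> (edge \<Rightarrow> bool) \<Rightarrow> bool" where
  "enl_in_P i j VH EH \<omega> \<longleftrightarrow>
     ancestors (enl_edges VH EH \<omega>) i \<inter> ancestors (enl_edges VH EH \<omega>) j \<noteq> {}"

definition crit_prob :: "node \<Rightarrow> node \<Rightarrow> node set \<Rightarrow> edge set \<Rightarrow> real" where
  "crit_prob i j VH EH =
     Inf {p \<in> {0..1}. measure (perc_measure p)
            {\<omega> \<in> space (perc_measure p). enl_in_P i j VH EH \<omega>} = 1}"

end

theory Submission
  imports Defs
begin

text \<open>
  For \<open>p < 1\<close> the finitely many lattice edges incident to nodes of \<open>H\<close> are all closed with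
  probability \<open>(1 - p)^N > 0\<close>; then every cluster \<open>C(k)\<close>, \<open>k \<in> V(H)\<close>, is trivial, so
  \<open>U(H) = H\<close>, in which the ancestor sets of \<open>i\<close> and \<open>j\<close> are disjoint. For \<open>p = 1\<close> all edges
  of the rectangle spanned by \<open>i\<close> and \<open>j\<close> are open almost surely, they then belong to \<open>C(i)\<close>,
  and the lower-left corner of the rectangle is a common ancestor. That the event \<open>U(H) \<in> P\<close>
  is measurable needs an argument of its own: it is increasing and witnessed by finitely many
  open edges, hence a countable union of cylinders.
\<close>

lemma rtrancl_finite_subrel:
  assumes "(a, b) \<in> R\<^sup>*"
  obtains R' where "finite R'" "R' \<subseteq> R" "(a, b) \<in> R'\<^sup>*"
proof -
  from assms have "\<exists>R'. finite R' \<and> R' \<subseteq> R \<and> (a, b) \<in> R'\<^sup>*"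
  proof (induction rule: rtrancl_induct)
    case base
    show ?case by blast
  next
    case (step y z)
    then obtain R' where "finite R'" "R' \<subseteq> R" "(a, y) \<in> R'\<^sup>*" by blast
    with step.hyps(2) show ?case
      by (intro exI[of _ "insert (y, z) R'"])
        (auto intro: rtrancl_into_rtrancl rtrancl_mono[THEN subsetD, rotated])
  qed
  with that show ?thesis by blast
qed

lemma ancestors_mono: "E \<subseteq> E' \<Longrightarrow> ancestors E u \<subseteq> ancestors E' u"
  unfolding ancestors_def using rtrancl_mono[of E E'] by blast

lemma cluster_nodes_mono:
  assumes "open_edges \<omega> \<subseteq> open_edges \<omega>'"
  shows "cluster_nodes \<omega> k \<subseteq> cluster_nodes \<omega>' k"
proof -
  have "open_edges \<omega> \<union> (open_edges \<omega>)\<inverse> \<subseteq> open_edges \<omega>' \<union> (open_edges \<omega>')\<inverse>"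
    using assms by blast
  then show ?thesis unfolding cluster_nodes_def by (blast dest: rtrancl_mono)
qed

lemma cluster_edges_mono:
  "open_edges \<omega> \<subseteq> open_edges \<omega>' \<Longrightarrow> cluster_edges \<omega> k \<subseteq> cluster_edges \<omega>' k"
  unfolding cluster_edges_def using cluster_nodes_mono by blast

lemma enl_edges_mono:
  "open_edges \<omega> \<subseteq> open_edges \<omega>' \<Longrightarrow> enl_edges VH EH \<omega> \<subseteq> enl_edges VH EH \<omega>'"
  unfolding enl_edges_def using cluster_edges_mono by blast

lemma enl_in_P_mono:
  "open_edges \<omega> \<subseteq> open_edges \<omega>' \<Longrightarrow> enl_in_P i j VH EH \<omega> \<Longrightarrow> enl_in_P i j VH EH \<omega>'"
  unfolding enl_in_P_def using ancestors_mono[OF enl_edges_mono] by blast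

lemma open_edges_of_set: "F \<subseteq> lattice_edges \<Longrightarrow> open_edges (\<lambda>e. e \<in> F) = F"
  unfolding open_edges_def by blast

lemma open_edges_of_set_mono: "F \<subseteq> G \<Longrightarrow> open_edges (\<lambda>e. e \<in> F) \<subseteq> open_edges (\<lambda>e. e \<in> G)"
  unfolding open_edges_def by blast

lemma cluster_nodes_finite_witness:
  assumes "v \<in> cluster_nodes \<omega> k"
  obtains F where "finite F" "F \<subseteq> open_edges \<omega>" "v \<in> cluster_nodes (\<lambda>e. e \<in> F) k"
proof -
  let ?O = "open_edges \<omega>"
  have "(k, v) \<in> (?O \<union> ?O\<inverse>)\<^sup>*" using assms by (simp add: cluster_nodes_def)
  then obtain S where S: "finite S" "S \<subseteq> ?O \<union> ?O\<inverse>" "(k, v) \<in> S\<^sup>*"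
    by (rule rtrancl_finite_subrel)
  define F where "F = (S \<union> S\<inverse>) \<inter> ?O"
  have F: "finite F" "F \<subseteq> ?O" using S(1) by (auto simp: F_def)
  have "S \<subseteq> F \<union> F\<inverse>" using S(2) unfolding F_def by blast
  then have "(k, v) \<in> (F \<union> F\<inverse>)\<^sup>*" using S(3) rtrancl_mono[of S] by blast
  moreover have "open_edges (\<lambda>e. e \<in> F) = F"
    using F(2) by (intro open_edges_of_set) (auto simp: open_edges_def)
  ultimately show ?thesis by (intro that[OF F]) (simp add: cluster_nodes_def)
qed

lemma cluster_nodes_open_edge:
  assumes "e \<in> open_edges \<omega>" "fst e \<in> cluster_nodes \<omega> k"
  shows "snd e \<in> cluster_nodes \<omega> k"
proof -
  have "(fst e, snd e) \<in> open_edges \<omega> \<union> (open_edges \<omega>)\<inverse>" using assms(1) by simp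
  from rtrancl_into_rtrancl[OF _ this] assms(2) show ?thesis
    unfolding cluster_nodes_def by blast
qed

lemma enl_edges_finite_witness:
  assumes "e \<in> enl_edges VH EH \<omega>"
  obtains F where "finite F" "F \<subseteq> open_edges \<omega>" "e \<in> enl_edges VH EH (\<lambda>e. e \<in> F)"
proof (cases "e \<in> EH")
  case True
  then show ?thesis by (intro that[of "{}"]) (simp_all add: enl_edges_def)
next
  case False
  then obtain k where k: "k \<in> VH" and "e \<in> cluster_edges \<omega> k"
    using assms unfolding enl_edges_def by blast
  then have e: "e \<in> open_edges \<omega>" and a: "fst e \<in> cluster_nodes \<omega> k"
    unfolding cluster_edges_def by blast+
  obtain F where F: "finite F" "F \<subseteq> open_edges \<omega>" "fst e \<in> cluster_nodes (\<lambda>e. e \<in> F) k"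
    using cluster_nodes_finite_witness[OF a] .
  let ?G = "insert e F"
  have open_G: "open_edges (\<lambda>e. e \<in> ?G) = ?G"
    using e F(2) by (intro open_edges_of_set) (unfold open_edges_def, blast)
  have "fst e \<in> cluster_nodes (\<lambda>e. e \<in> ?G) k"
    using F(3) cluster_nodes_mono[OF open_edges_of_set_mono[of F ?G]] by blast
  moreover from this have "snd e \<in> cluster_nodes (\<lambda>e. e \<in> ?G) k"
    by (rule cluster_nodes_open_edge[rotated]) (simp only: open_G insertI1)
  ultimately have "e \<in> cluster_edges (\<lambda>e. e \<in> ?G) k"
    unfolding cluster_edges_def open_G by blast
  with k have "e \<in> enl_edges VH EH (\<lambda>e. e \<in> ?G)" unfolding enl_edges_def by blast
  moreover have "finite ?G" "?G \<subseteq> open_edges \<omega>" using F(1,2) e by simp_all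
  ultimately show ?thesis using that by blast
qed

lemma enl_edges_finite_set_witness:
  assumes "finite R" "R \<subseteq> enl_edges VH EH \<omega>"
  obtains F where "finite F" "F \<subseteq> open_edges \<omega>" "R \<subseteq> enl_edges VH EH (\<lambda>e. e \<in> F)"
proof -
  from assms have "\<exists>F. finite F \<and> F \<subseteq> open_edges \<omega> \<and> R \<subseteq> enl_edges VH EH (\<lambda>e. e \<in> F)"
  proof (induction R rule: finite_induct)
    case empty
    show ?case by blast
  next
    case (insert e R)
    then obtain F where F: "finite F" "F \<subseteq> open_edges \<omega>" "R \<subseteq> enl_edges VH EH (\<lambda>e. e \<in> F)"
      by blast
    have "e \<in> enl_edges VH EH \<omega>" using insert.prems by simp
    then obtain G where G: "finite G" "G \<subseteq> open_edges \<omega>" "e \<in> enl_edges VH EH (\<lambda>e. e \<in> G)"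
      by (rule enl_edges_finite_witness)
    have "R \<subseteq> enl_edges VH EH (\<lambda>e. e \<in> F \<union> G)" "e \<in> enl_edges VH EH (\<lambda>e. e \<in> F \<union> G)"
      using F(3) G(3) enl_edges_mono[OF open_edges_of_set_mono[of F "F \<union> G"]]
        enl_edges_mono[OF open_edges_of_set_mono[of G "F \<union> G"]] by blast+
    with F G show ?case by (intro exI[of _ "F \<union> G"]) simp
  qed
  with that show ?thesis by blast
qed

lemma enl_in_P_finite_witness:
  assumes "enl_in_P i j VH EH \<omega>"
  obtains F where "finite F" "F \<subseteq> open_edges \<omega>" "enl_in_P i j VH EH (\<lambda>e. e \<in> F)"
proof -
  let ?E = "enl_edges VH EH \<omega>"
  obtain w where wi: "(w, i) \<in> ?E\<^sup>*" and wj: "(w, j) \<in> ?E\<^sup>*"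
    using assms unfolding enl_in_P_def ancestors_def by blast
  obtain Ri where Ri: "finite Ri" "Ri \<subseteq> ?E" "(w, i) \<in> Ri\<^sup>*"
    using wi by (rule rtrancl_finite_subrel)
  obtain Rj where Rj: "finite Rj" "Rj \<subseteq> ?E" "(w, j) \<in> Rj\<^sup>*"
    using wj by (rule rtrancl_finite_subrel)
  have "finite (Ri \<union> Rj)" "Ri \<union> Rj \<subseteq> ?E" using Ri Rj by simp_all
  then obtain F where F: "finite F" "F \<subseteq> open_edges \<omega>"
      "Ri \<union> Rj \<subseteq> enl_edges VH EH (\<lambda>e. e \<in> F)"
    by (rule enl_edges_finite_set_witness)
  then have "(w, i) \<in> (enl_edges VH EH (\<lambda>e. e \<in> F))\<^sup>*"
    and "(w, j) \<in> (enl_edges VH EH (\<lambda>e. e \<in> F))\<^sup>*"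
    using Ri(3) Rj(3) rtrancl_mono[of Ri] rtrancl_mono[of Rj] by blast+
  with F that show ?thesis unfolding enl_in_P_def ancestors_def by blast
qed

lemma prob_space_perc_measure: "prob_space (perc_measure p)"
  unfolding perc_measure_def by (intro prob_space_PiM prob_space_measure_pmf)

definition cylinder :: "real \<Rightarrow> edge set \<Rightarrow> bool \<Rightarrow> (edge \<Rightarrow> bool) set" where
  "cylinder p F b = {\<omega> \<in> space (perc_measure p). \<forall>e\<in>F. \<omega> e = b}"

lemma sets_cylinder:
  assumes "finite F" "F \<subseteq> lattice_edges"
  shows "cylinder p F b \<in> sets (perc_measure p)"
  unfolding cylinder_def perc_measure_def using assms
  by (intro sets.sets_Collect_finite_All measurable_sets[OF measurable_component_singleton]) auto

lemma measure_cylinder: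
  assumes "finite F" "F \<subseteq> lattice_edges"
  shows "measure (perc_measure p) (cylinder p F b) = pmf (bernoulli_pmf p) b ^ card F"
proof -
  interpret product_prob_space "\<lambda>_. measure_pmf (bernoulli_pmf p)" lattice_edges
    by unfold_locales
  have "emeasure (perc_measure p) (cylinder p F b)
      = (\<Prod>e\<in>F. emeasure (measure_pmf (bernoulli_pmf p)) {b})"
    unfolding cylinder_def perc_measure_def
    using emeasure_PiM_Collect[of F "\<lambda>_. {b}"] assms by simp
  also have "\<dots> = ennreal (pmf (bernoulli_pmf p) b ^ card F)"
    by (simp add: emeasure_pmf_single prod_ennreal ennreal_power)
  finally show ?thesis by (simp add: measure_def)
qed

definition perc_event :: "real \<Rightarrow> ((edge \<Rightarrow> bool) \<Rightarrow> bool) \<Rightarrow> (edge \<Rightarrow> bool) set" where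
  "perc_event p P = {\<omega> \<in> space (perc_measure p). P \<omega>}"

lemma enl_in_P_event_eq_UN_cylinders:
  "perc_event p (enl_in_P i j VH EH) =
     (\<Union>F\<in>{F. finite F \<and> F \<subseteq> lattice_edges \<and> enl_in_P i j VH EH (\<lambda>e. e \<in> F)}. cylinder p F True)"
  (is "_ = ?U")
proof (intro equalityI subsetI)
  fix \<omega> assume "\<omega> \<in> perc_event p (enl_in_P i j VH EH)"
  then have \<omega>: "\<omega> \<in> space (perc_measure p)" "enl_in_P i j VH EH \<omega>"
    by (simp_all add: perc_event_def)
  obtain F where F: "finite F" "F \<subseteq> open_edges \<omega>" "enl_in_P i j VH EH (\<lambda>e. e \<in> F)"
    using enl_in_P_finite_witness[OF \<omega>(2)] .
  then have "F \<subseteq> lattice_edges" "\<omega> \<in> cylinder p F True"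
    using \<omega>(1) unfolding open_edges_def cylinder_def by blast+
  with F show "\<omega> \<in> ?U" by blast
next
  fix \<omega> assume "\<omega> \<in> ?U"
  then obtain F where "\<omega> \<in> cylinder p F True" "enl_in_P i j VH EH (\<lambda>e. e \<in> F)" by blast
  moreover from this have "open_edges (\<lambda>e. e \<in> F) \<subseteq> open_edges \<omega>"
    unfolding cylinder_def open_edges_def by blast
  ultimately show "\<omega> \<in> perc_event p (enl_in_P i j VH EH)"
    using enl_in_P_mono unfolding perc_event_def cylinder_def by blast
qed

lemma sets_enl_in_P_event: "perc_event p (enl_in_P i j VH EH) \<in> sets (perc_measure p)"
proof -
  have "countable {F. finite F \<and> F \<subseteq> lattice_edges \<and> enl_in_P i j VH EH (\<lambda>e. e \<in> F)}"
    by (rule countable_subset[OF _ countable_Collect_finite_subset[OF countableI_type]]) blast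
  then show ?thesis unfolding enl_in_P_event_eq_UN_cylinders
    by (rule sets.countable_UN'') (auto intro: sets_cylinder)
qed

definition rect :: "node \<Rightarrow> node \<Rightarrow> node set" where
  "rect a b = {x. fst a \<le> fst x \<and> fst x \<le> fst b \<and> snd a \<le> snd x \<and> snd x \<le> snd b}"

definition rect_edges :: "node \<Rightarrow> node \<Rightarrow> edge set" where
  "rect_edges a b = lattice_edges \<inter> rect a b \<times> rect a b"

lemma finite_rect_edges: "finite (rect_edges a b)"
proof -
  have "rect a b = {fst a..fst b} \<times> {snd a..snd b}" by (auto simp: rect_def)
  then have "finite (rect a b)" by simp
  then show ?thesis unfolding rect_edges_def by blast
qed

lemma rect_edges_path:
  assumes "u \<in> rect a b" "v \<in> rect a b" "fst u \<le> fst v" "snd u \<le> snd v"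
  shows "(u, v) \<in> (rect_edges a b)\<^sup>*"
  using assms
proof (induction "nat (fst v - fst u + snd v - snd u)" arbitrary: u rule: less_induct)
  case less
  consider "u = v" | "fst u < fst v" | "fst u = fst v" "snd u < snd v"
    using less.prems(3,4) prod_eqI by fastforce
  then show ?case
  proof cases
    case 1
    then show ?thesis by simp
  next
    case 2
    let ?w = "(fst u + 1, snd u)"
    have "?w \<in> rect a b" using less.prems 2 by (auto simp: rect_def)
    moreover from this have "(u, ?w) \<in> rect_edges a b"
      using less.prems(1) by (auto simp: rect_edges_def lattice_edges_def)
    moreover have "(?w, v) \<in> (rect_edges a b)\<^sup>*"
      using less.hyps[of ?w] less.prems 2 \<open>?w \<in> rect a b\<close> by auto
    ultimately show ?thesis by (blast intro: converse_rtrancl_into_rtrancl)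
  next
    case 3
    let ?w = "(fst u, snd u + 1)"
    have "?w \<in> rect a b" using less.prems 3 by (auto simp: rect_def)
    moreover from this have "(u, ?w) \<in> rect_edges a b"
      using less.prems(1) by (auto simp: rect_edges_def lattice_edges_def)
    moreover have "(?w, v) \<in> (rect_edges a b)\<^sup>*"
      using less.hyps[of ?w] less.prems 3 \<open>?w \<in> rect a b\<close> by auto
    ultimately show ?thesis by (blast intro: converse_rtrancl_into_rtrancl)
  qed
qed

lemma enl_in_P_rect_edges_open:
  fixes i j :: node
  defines "a \<equiv> (min (fst i) (fst j), min (snd i) (snd j))"
    and "b \<equiv> (max (fst i) (fst j), max (snd i) (snd j))"
  assumes "i \<in> VH"
  shows "enl_in_P i j VH EH (\<lambda>e. e \<in> rect_edges a b)"
proof -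
  let ?R = "rect_edges a b"
  have open_R: "open_edges (\<lambda>e. e \<in> ?R) = ?R"
    by (rule open_edges_of_set) (simp add: rect_edges_def)
  have corners: "a \<in> rect a b" "i \<in> rect a b" "j \<in> rect a b"
    by (auto simp: rect_def a_def b_def)
  have from_a: "(a, v) \<in> ?R\<^sup>*" if "v \<in> rect a b" for v
    using rect_edges_path[OF corners(1) that] that by (simp add: rect_def)
  have "rect a b \<subseteq> cluster_nodes (\<lambda>e. e \<in> ?R) i"
  proof
    fix v assume "v \<in> rect a b"
    have "(i, a) \<in> (?R\<inverse>)\<^sup>*" using from_a[OF corners(2)] by (simp add: rtrancl_converse)
    moreover have "(a, v) \<in> ?R\<^sup>*" using from_a[OF \<open>v \<in> rect a b\<close>] .
    ultimately have "(i, v) \<in> (?R \<union> ?R\<inverse>)\<^sup>*"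
      using rtrancl_mono[of "?R\<inverse>" "?R \<union> ?R\<inverse>"] rtrancl_mono[of ?R "?R \<union> ?R\<inverse>"]
      by (blast intro: rtrancl_trans)
    then show "v \<in> cluster_nodes (\<lambda>e. e \<in> ?R) i" unfolding cluster_nodes_def open_R by simp
  qed
  moreover have "fst e \<in> rect a b \<and> snd e \<in> rect a b" if "e \<in> ?R" for e
    using that by (auto simp: rect_edges_def)
  ultimately have "?R \<subseteq> cluster_edges (\<lambda>e. e \<in> ?R) i"
    unfolding cluster_edges_def open_R by blast
  with assms(3) have "?R \<subseteq> enl_edges VH EH (\<lambda>e. e \<in> ?R)"
    unfolding enl_edges_def by blast
  then have "a \<in> ancestors (enl_edges VH EH (\<lambda>e. e \<in> ?R)) i"
    and "a \<in> ancestors (enl_edges VH EH (\<lambda>e. e \<in> ?R)) j"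
    using from_a corners rtrancl_mono unfolding ancestors_def by blast+
  then show ?thesis unfolding enl_in_P_def by blast
qed

definition incident_edges :: "node set \<Rightarrow> edge set" where
  "incident_edges V = {e \<in> lattice_edges. fst e \<in> V \<or> snd e \<in> V}"

lemma finite_incident_edges:
  assumes "finite V"
  shows "finite (incident_edges V)"
proof -
  have "incident_edges V \<subseteq> (\<Union>u\<in>V. {(u, (fst u + 1, snd u)), (u, (fst u, snd u + 1)),
                                      ((fst u - 1, snd u), u), ((fst u, snd u - 1), u)})"
    by (auto simp: incident_edges_def lattice_edges_def)
  then show ?thesis by (rule finite_subset) (simp add: assms)
qed

lemma enl_edges_incident_closed:
  assumes "\<forall>e\<in>incident_edges VH. \<not> \<omega> e"
  shows "enl_edges VH EH \<omega> = EH"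
proof -
  have "cluster_edges \<omega> k = {}" if "k \<in> VH" for k
  proof -
    have no_open: "e \<notin> open_edges \<omega>" if "fst e = k \<or> snd e = k" for e
      using assms \<open>k \<in> VH\<close> that unfolding incident_edges_def open_edges_def by blast
    have "(k, v) \<in> (open_edges \<omega> \<union> (open_edges \<omega>)\<inverse>)\<^sup>* \<Longrightarrow> v = k" for v
      by (erule converse_rtranclE) (use no_open[of "(k, _)"] no_open[of "(_, k)"] in auto)
    then have "cluster_nodes \<omega> k = {k}" unfolding cluster_nodes_def by blast
    then show ?thesis using no_open unfolding cluster_edges_def by blast
  qed
  then show ?thesis unfolding enl_edges_def by simp
qed

lemma prob_enl_in_P_lt_one:
  assumes "finite VH" "ancestors EH i \<inter> ancestors EH j = {}" "0 \<le> p" "p < 1"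
  shows "measure (perc_measure p) (perc_event p (enl_in_P i j VH EH)) < 1"
proof -
  interpret prob_space "perc_measure p" by (rule prob_space_perc_measure)
  let ?C = "cylinder p (incident_edges VH) False"
  have "finite (incident_edges VH)" "incident_edges VH \<subseteq> lattice_edges"
    using finite_incident_edges[OF assms(1)] by (auto simp: incident_edges_def)
  then have C: "?C \<in> events" "prob ?C = (1 - p) ^ card (incident_edges VH)"
    using sets_cylinder measure_cylinder assms(3,4) by simp_all
  have "\<not> enl_in_P i j VH EH \<omega>" if "\<omega> \<in> ?C" for \<omega>
    using that enl_edges_incident_closed[of VH \<omega> EH] assms(2)
    unfolding cylinder_def enl_in_P_def by simp
  then have "perc_event p (enl_in_P i j VH EH) \<subseteq> space (perc_measure p) - ?C"
    unfolding perc_event_def by blast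
  then have "prob (perc_event p (enl_in_P i j VH EH)) \<le> prob (space (perc_measure p) - ?C)"
    using C(1) by (intro finite_measure_mono) auto
  also have "\<dots> = 1 - (1 - p) ^ card (incident_edges VH)"
    using prob_compl[OF C(1)] C(2) by simp
  also have "\<dots> < 1" using assms(4) by simp
  finally show ?thesis .
qed

lemma prob_enl_in_P_one:
  assumes "i \<in> VH"
  shows "measure (perc_measure 1) (perc_event 1 (enl_in_P i j VH EH)) = 1"
proof -
  interpret prob_space "perc_measure 1" by (rule prob_space_perc_measure)
  define R where "R = rect_edges (min (fst i) (fst j), min (snd i) (snd j))
                                (max (fst i) (fst j), max (snd i) (snd j))"
  have R: "finite R" "R \<subseteq> lattice_edges"
    using finite_rect_edges by (auto simp: R_def rect_edges_def)
  have "enl_in_P i j VH EH \<omega>" if "\<omega> \<in> cylinder 1 R True" for \<omega>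
  proof (rule enl_in_P_mono)
    show "open_edges (\<lambda>e. e \<in> R) \<subseteq> open_edges \<omega>"
      using that unfolding cylinder_def open_edges_def by blast
    show "enl_in_P i j VH EH (\<lambda>e. e \<in> R)"
      unfolding R_def using assms by (rule enl_in_P_rect_edges_open)
  qed
  then have "cylinder 1 R True \<subseteq> perc_event 1 (enl_in_P i j VH EH)"
    unfolding perc_event_def cylinder_def by blast
  then have "prob (cylinder 1 R True) \<le> prob (perc_event 1 (enl_in_P i j VH EH))"
    by (intro finite_measure_mono sets_enl_in_P_event)
  moreover have "prob (cylinder 1 R True) = 1" using measure_cylinder[OF R] by simp
  ultimately show ?thesis using prob_le_1[of "perc_event 1 (enl_in_P i j VH EH)"] by linarith
qed

theorem mainTheorem8:
  fixes i j :: node and VH :: "node set" and EH :: "edge set"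
  assumes "i \<noteq> j"
    and "finite VH"
    and "EH \<subseteq> lattice_edges"
    and "EH \<subseteq> VH \<times> VH"
    and "i \<in> VH" and "j \<in> VH"
    and "ancestors EH i \<inter> ancestors EH j = {}"
  shows "crit_prob i j VH EH = 1"
proof -
  let ?prob = "\<lambda>p. measure (perc_measure p) (perc_event p (enl_in_P i j VH EH))"
  have "?prob p \<noteq> 1" if "p \<in> {0..1}" "p \<noteq> 1" for p
    using prob_enl_in_P_lt_one[OF assms(2,7)] that by fastforce
  then have "{p \<in> {0..1}. ?prob p = 1} = {1}"
    using prob_enl_in_P_one[OF assms(5), of j EH] by auto
  then show ?thesis unfolding crit_prob_def perc_event_def by simp
qed

end
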